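(* Let $\mathbf x$ be a $p$-variate random vector with finite second moments and full-rank covariance, let $\mathbf x^{st}=\mathrm{Cov}(\mathbf x)^{-1/2}(\mathbf x-E(\mathbf x))$, and suppose there exist a nonsingular $\mathbf A$ and vector $\mathbf b$ such that $\mathbf z=\mathbf A\mathbf x+\mathbf b=(z_1,\dots,z_p)'$ has mutually independent components with $E(\mathbf z)=\mathbf 0$ and $\mathrm{Cov}(\mathbf z)=\mathbf I_p$. Let $D$ be a squared dispersion measure defined on all linear combinations of $z_1,\dots,z_p$, and let $\mathbf v\in\mathbb{R}^p$ with $\mathbf v'\mathbf v=1$. (1) If $D$ is subadditive, then $D(\mathbf v'\mathbf x^{st})\le\max_j D(z_j)$. (2) If $D$ is superadditive, then $D(\mathbf v'\mathbf x^{st})\ge\min_j D(z_j)$.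
   Context: $\mathrm{Cov}(\mathbf x)^{-1/2}=\mathbf U\mathbf D^{-1/2}\mathbf U'$ where $\mathrm{Cov}(\mathbf x)=\mathbf U\mathbf D\mathbf U'$ is the eigendecomposition. A squared dispersion measure $D$ depends only on the distribution of its argument and satisfies $D(ax+b)=a^2D(x)$ for all real $a,b$, $D\ge0$. It is subadditive if $D(x+y)\le D(x)+D(y)$ for all independent $x,y$, and superadditive if $D(x+y)\ge D(x)+D(y)$ for all independent $x,y$. *)

theory Defs
  imports "HOL-Probability.Probability"
begin

definition mean_vec :: "'a measure \<Rightarrow> ('a \<Rightarrow> real^'p) \<Rightarrow> real^'p" where
  "mean_vec M x = (\<chi> i. integral\<^sup>L M (\<lambda>\<omega>. x \<omega> $ i))"

definition cov_mat :: "'a measure \<Rightarrow> ('a \<Rightarrow> real^'p) \<Rightarrow> real^'p^'p" where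
  "cov_mat M x = (\<chi> i j. integral\<^sup>L M (\<lambda>\<omega>. (x \<omega> $ i - mean_vec M x $ i) * (x \<omega> $ j - mean_vec M x $ j)))"

definition diag_mat :: "('p \<Rightarrow> real) \<Rightarrow> real^'p^'p" where
  "diag_mat d = (\<chi> i j. if i = j then d i else 0)"

definition inv_sqrt_mat :: "real^'p^'p \<Rightarrow> real^'p^'p" where
  "inv_sqrt_mat C = (SOME S. \<exists>U d. orthogonal_matrix U \<and> C = U ** diag_mat d ** transpose U
      \<and> S = U ** diag_mat (\<lambda>i. 1 / sqrt (d i)) ** transpose U)"

definition standardize :: "'a measure \<Rightarrow> ('a \<Rightarrow> real^'p) \<Rightarrow> 'a \<Rightarrow> real^'p" where
  "standardize M x = (\<lambda>\<omega>. inv_sqrt_mat (cov_mat M x) *v (x \<omega> - mean_vec M x))"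

definition lin_combs :: "('a \<Rightarrow> real^'p) \<Rightarrow> ('a \<Rightarrow> real) set" where
  "lin_combs z = {u. \<exists>c d. u = (\<lambda>\<omega>. c \<bullet> z \<omega> + d)}"

definition sq_dispersion_on :: "'a measure \<Rightarrow> ('a \<Rightarrow> real^'p) \<Rightarrow> (real measure \<Rightarrow> real) \<Rightarrow> bool" where
  "sq_dispersion_on M z D \<longleftrightarrow>
     (\<forall>u \<in> lin_combs z. D (distr M borel u) \<ge> 0) \<and>
     (\<forall>u \<in> lin_combs z. \<forall>a b::real.
        D (distr M borel (\<lambda>\<omega>. a * u \<omega> + b)) = a\<^sup>2 * D (distr M borel u))"

definition subadditive_on :: "'a measure \<Rightarrow> ('a \<Rightarrow> real^'p) \<Rightarrow> (real measure \<Rightarrow> real) \<Rightarrow> bool" where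
  "subadditive_on M z D \<longleftrightarrow>
     (\<forall>u \<in> lin_combs z. \<forall>w \<in> lin_combs z. prob_space.indep_var M borel u borel w \<longrightarrow>
        D (distr M borel (\<lambda>\<omega>. u \<omega> + w \<omega>)) \<le> D (distr M borel u) + D (distr M borel w))"

definition superadditive_on :: "'a measure \<Rightarrow> ('a \<Rightarrow> real^'p) \<Rightarrow> (real measure \<Rightarrow> real) \<Rightarrow> bool" where
  "superadditive_on M z D \<longleftrightarrow>
     (\<forall>u \<in> lin_combs z. \<forall>w \<in> lin_combs z. prob_space.indep_var M borel u borel w \<longrightarrow>
        D (distr M borel (\<lambda>\<omega>. u \<omega> + w \<omega>)) \<ge> D (distr M borel u) + D (distr M borel w))"

end

theory Submission
  imports Defs
begin

text \<open>
  Put \<open>z = A x + b\<close>. Since \<open>Cov z = I\<close>, \<open>Cov x = A\<^sup>-\<^sup>1 (A\<^sup>-\<^sup>1)'\<close> is positive definite, and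
  its inverse square root \<open>S\<close> is symmetric with \<open>S Cov(x) S = I\<close>. Hence \<open>v' x\<^sup>s\<^sup>t = w' z + c\<close>
  with the unit vector \<open>w = (S A\<^sup>-\<^sup>1)' v\<close>, and \<open>D(v' x\<^sup>s\<^sup>t) = D(w' z)\<close> because \<open>D\<close> ignores
  location. Splitting off one independent summand at a time, sub- (super-)additivity and
  \<open>D(a u) = a\<^sup>2 D(u)\<close> give \<open>D(w' z) \<le> \<Sum>\<^sub>j w\<^sub>j\<^sup>2 D(z\<^sub>j)\<close> (resp. \<open>\<ge>\<close>), a convex combination
  of the \<open>D(z\<^sub>j)\<close>.

  The spectral theorem behind \<open>Cov(x)\<^sup>-\<^sup>1\<^sup>/\<^sup>2\<close> is obtained by maximising the Rayleigh
  quotient over invariant subspaces.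
\<close>

lemma nonpos_quadratic_imp_linear_coeff_nonpos:
  fixes a e :: real
  assumes "\<And>t. 2 * t * a + t\<^sup>2 * e \<le> 0"
  shows "a \<le> 0"
proof (rule ccontr)
  assume "\<not> a \<le> 0"
  define t where "t = a / (\<bar>e\<bar> + 1)"
  have t: "t > 0" "t * \<bar>e\<bar> < a" using \<open>\<not> a \<le> 0\<close>
    by (auto simp: t_def field_simps)
  have "0 < t * (2 * a - t * \<bar>e\<bar>)" using t \<open>\<not> a \<le> 0\<close> by (intro mult_pos_pos) auto
  also have "\<dots> = 2 * t * a + t\<^sup>2 * (- \<bar>e\<bar>)" by (simp add: power2_eq_square algebra_simps)
  also have "\<dots> \<le> 2 * t * a + t\<^sup>2 * e" by (intro add_left_mono mult_left_mono) auto
  finally show False using assms[of t] by simp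
qed

lemma inner_matrix_vector_transpose: "(x::real^'n) \<bullet> (C *v y) = (transpose C *v x) \<bullet> y"
  by (simp add: dot_lmul_matrix)

lemma rayleigh_maximizer_is_eigenvector:
  fixes C :: "real^'n^'n"
  assumes sym: "transpose C = C" and W: "subspace W" and inv: "\<And>x. x \<in> W \<Longrightarrow> C *v x \<in> W"
    and u: "u \<in> W" "u \<bullet> u = 1"
    and max: "\<And>y. y \<in> W \<Longrightarrow> y \<bullet> (C *v y) \<le> (u \<bullet> (C *v u)) * (y \<bullet> y)"
  shows "C *v u = (u \<bullet> (C *v u)) *\<^sub>R u"
proof -
  define l where "l = u \<bullet> (C *v u)"
  define r where "r = C *v u - l *\<^sub>R u"
  have rW: "r \<in> W" unfolding r_def using W u inv by (simp add: subspace_diff subspace_scale)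
  have "u \<bullet> r = 0" using u(2) by (simp add: r_def l_def inner_diff_right)
  then have ru: "r \<bullet> u = 0" by (simp add: inner_commute)
  have "C *v u = r + l *\<^sub>R u" by (simp add: r_def)
  then have rCu: "r \<bullet> (C *v u) = r \<bullet> r" by (simp add: inner_add_right ru)
  have uCr: "u \<bullet> (C *v r) = r \<bullet> (C *v u)"
    by (metis inner_commute inner_matrix_vector_transpose sym)
  \<comment> \<open>maximality of \<open>u\<close> against the perturbations \<open>u + t r\<close>\<close>
  have "2 * t * (r \<bullet> r) + t\<^sup>2 * (r \<bullet> (C *v r) - l * (r \<bullet> r)) \<le> 0" for t
  proof -
    have "(u + t *\<^sub>R r) \<bullet> (C *v (u + t *\<^sub>R r)) = l + 2 * t * (r \<bullet> r) + t\<^sup>2 * (r \<bullet> (C *v r))"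
      using uCr rCu by (simp add: matrix_vector_right_distrib matrix_vector_mult_scaleR inner_add_left
          inner_add_right l_def power2_eq_square algebra_simps)
    moreover have "(u + t *\<^sub>R r) \<bullet> (u + t *\<^sub>R r) = 1 + t\<^sup>2 * (r \<bullet> r)"
      using u(2) ru by (simp add: inner_add_left inner_add_right inner_commute power2_eq_square)
    moreover have "u + t *\<^sub>R r \<in> W" using W u rW by (simp add: subspace_add subspace_scale)
    ultimately show ?thesis using max[of "u + t *\<^sub>R r"] by (simp add: l_def algebra_simps)
  qed
  then have "r \<bullet> r \<le> 0" by (rule nonpos_quadratic_imp_linear_coeff_nonpos)
  then have "r = 0" by (metis inner_eq_zero_iff inner_ge_zero order_antisym)
  then show ?thesis by (simp add: r_def l_def)
qed

lemma symmetric_matrix_eigenvector_in_invariant_subspace: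
  fixes C :: "real^'n^'n"
  assumes sym: "transpose C = C" and W: "subspace W" "W \<noteq> {0}"
    and inv: "\<And>x. x \<in> W \<Longrightarrow> C *v x \<in> W"
  shows "\<exists>u\<in>W. norm u = 1 \<and> C *v u = (u \<bullet> (C *v u)) *\<^sub>R u"
proof -
  define K where "K = sphere 0 1 \<inter> W"
  define q where "q y = y \<bullet> (C *v y)" for y
  have unit_in_K: "(1 / norm y) *\<^sub>R y \<in> K" if "y \<in> W" "y \<noteq> 0" for y
    using that W(1) by (simp add: K_def subspace_scale)
  have "compact K" unfolding K_def using closed_subspace[OF W(1)] by (simp add: compact_Int_closed)
  moreover have "K \<noteq> {}"
  proof -
    obtain y where "y \<in> W" "y \<noteq> 0" using W subspace_0 by blast
    then show ?thesis using unit_in_K by blast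
  qed
  moreover have "continuous_on K q"
    unfolding q_def by (intro continuous_intros linear_continuous_on matrix_vector_mul_bounded_linear)
  ultimately obtain u where uK: "u \<in> K" and umax: "\<And>y. y \<in> K \<Longrightarrow> q y \<le> q u"
    using continuous_attains_sup[of K q] by blast
  have "q y \<le> q u * (y \<bullet> y)" if "y \<in> W" for y
  proof (cases "y = 0")
    case False
    have "q ((1 / norm y) *\<^sub>R y) = q y / (y \<bullet> y)"
      by (simp add: q_def matrix_vector_mult_scaleR power2_norm_eq_inner[symmetric] power2_eq_square)
    then show ?thesis using umax[OF unit_in_K[OF that False]] False by (simp add: divide_le_eq)
  qed (simp add: q_def)
  then have "C *v u = (u \<bullet> (C *v u)) *\<^sub>R u"
    using uK by (intro rayleigh_maximizer_is_eigenvector[OF sym W(1) inv])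
      (auto simp: K_def q_def norm_eq_1)
  then show ?thesis using uK by (auto simp: K_def)
qed

lemma symmetric_matrix_orthonormal_eigenvectors:
  fixes C :: "real^'n^'n"
  assumes sym: "transpose C = C" and "k \<le> CARD('n)"
  shows "\<exists>S. finite S \<and> card S = k \<and> pairwise orthogonal S \<and>
    (\<forall>s\<in>S. norm s = 1 \<and> (\<exists>l. C *v s = l *\<^sub>R s))"
  using \<open>k \<le> CARD('n)\<close>
proof (induction k)
  case 0
  show ?case by (intro exI[of _ "{}"]) auto
next
  case (Suc k)
  then obtain S where S: "finite S" "card S = k" "pairwise orthogonal S"
    and eig: "\<forall>s\<in>S. norm s = 1 \<and> (\<exists>l. C *v s = l *\<^sub>R s)"
    by auto
  define W where "W = {y. \<forall>s\<in>S. orthogonal s y}"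
  have W: "subspace W" unfolding W_def by (rule subspace_orthogonal_to_vectors)
  have "dim S < DIM(real^'n)"
    using dim_le_card[OF span_superset S(1)] S(2) Suc.prems by simp
  then obtain x where "x \<noteq> 0" "\<And>y. y \<in> span S \<Longrightarrow> orthogonal x y"
    using orthogonal_to_subspace_exists by blast
  then have "x \<in> W" "x \<noteq> 0" by (auto simp: W_def orthogonal_commute span_base)
  then have "W \<noteq> {0}" by blast
  moreover have "C *v y \<in> W" if "y \<in> W" for y
  proof -
    have "orthogonal s (C *v y)" if "s \<in> S" for s
    proof -
      obtain l where "C *v s = l *\<^sub>R s" using eig \<open>s \<in> S\<close> by blast
      then have "s \<bullet> (C *v y) = l * (s \<bullet> y)"
        by (simp add: inner_matrix_vector_transpose sym)
      then show ?thesis using \<open>y \<in> W\<close> \<open>s \<in> S\<close> by (simp add: W_def orthogonal_def)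
    qed
    then show ?thesis by (simp add: W_def)
  qed
  ultimately obtain u where u: "u \<in> W" "norm u = 1" "C *v u = (u \<bullet> (C *v u)) *\<^sub>R u"
    using symmetric_matrix_eigenvector_in_invariant_subspace[OF sym W] by blast
  have "u \<notin> S" using u(1,2) by (auto simp: W_def orthogonal_def norm_eq_1)
  then show ?case
    using S eig u by (intro exI[of _ "insert u S"])
      (auto simp: pairwise_insert W_def orthogonal_commute)
qed

lemma matrix_mul_diag_mat_nth: "(A ** diag_mat d) $ i $ j = A $ i $ j * d j"
proof -
  have "(\<Sum>k\<in>UNIV. A $ i $ k * (if k = j then d k else 0))
      = (\<Sum>k\<in>UNIV. if k = j then A $ i $ j * d j else 0)"
    by (rule sum.cong) auto
  then show ?thesis by (simp add: matrix_matrix_mult_def diag_mat_def)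
qed

lemma diag_mat_mult: "diag_mat a ** diag_mat b = diag_mat (\<lambda>i. a i * b i)"
proof -
  have "(diag_mat a ** diag_mat b) $ i $ j = diag_mat (\<lambda>i. a i * b i) $ i $ j" for i j
    unfolding matrix_mul_diag_mat_nth by (simp add: diag_mat_def)
  then show ?thesis by (simp add: vec_eq_iff)
qed

lemma transpose_diag_mat [simp]: "transpose (diag_mat d) = diag_mat d"
  by (simp add: diag_mat_def transpose_def vec_eq_iff)

lemma diag_mat_one: "diag_mat (\<lambda>_. 1) = mat 1"
  by (simp add: diag_mat_def mat_def vec_eq_iff)

lemma diag_mat_mult_axis: "diag_mat d *v axis i c = axis i (d i * c)"
proof -
  have "(\<Sum>j\<in>UNIV. (if k = j then d k else 0) * axis i c $ j)
      = (\<Sum>j\<in>UNIV. if j = k then axis i (d i * c) $ k else 0)" for k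
    by (rule sum.cong) (auto simp: axis_def)
  then show ?thesis by (simp add: diag_mat_def matrix_vector_mult_def vec_eq_iff)
qed

theorem symmetric_matrix_diagonalization:
  fixes C :: "real^'n^'n"
  assumes sym: "transpose C = C"
  shows "\<exists>U d. orthogonal_matrix U \<and> C = U ** diag_mat d ** transpose U"
proof -
  obtain S where S: "finite S" "card S = CARD('n)" "pairwise orthogonal S"
    and eig: "\<forall>s\<in>S. norm s = 1 \<and> (\<exists>l. C *v s = l *\<^sub>R s)"
    using symmetric_matrix_orthonormal_eigenvectors[OF sym order_refl] by blast
  obtain g where g: "bij_betw g (UNIV::'n set) S"
    using finite_same_card_bij[of "UNIV::'n set" S] S(1,2) by auto
  define d where "d j = (SOME l. C *v g j = l *\<^sub>R g j)" for j
  have gS: "g j \<in> S" for j using g by (auto simp: bij_betw_def)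
  have eig_g: "C *v g j = d j *\<^sub>R g j" for j
    unfolding d_def using eig gS[of j] by (metis (mono_tags, lifting) someI_ex)
  define U :: "real^'n^'n" where "U = (\<chi> i j. g j $ i)"
  have col: "column j U = g j" for j by (simp add: U_def column_def vec_eq_iff)
  have "g i \<noteq> g j" if "i \<noteq> j" for i j
    using g that by (auto simp: bij_betw_def inj_eq)
  then have oU: "orthogonal_matrix U"
    unfolding orthogonal_matrix_orthonormal_columns col
    using eig gS S(3) by (auto simp: pairwise_def)
  have "(C ** U) $ i $ j = (U ** diag_mat d) $ i $ j" for i j
  proof -
    have "(C ** U) $ i $ j = (C *v g j) $ i"
      by (simp add: U_def matrix_matrix_mult_def matrix_vector_mult_def)
    then show ?thesis by (simp add: eig_g matrix_mul_diag_mat_nth U_def)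
  qed
  then have "C ** U = U ** diag_mat d" by (simp add: vec_eq_iff)
  then have "C = U ** diag_mat d ** transpose U"
    using oU unfolding orthogonal_matrix_def by (metis matrix_mul_assoc matrix_mul_rid)
  then show ?thesis using oU by blast
qed

lemma inv_sqrt_mat_spectral:
  fixes C :: "real^'n^'n"
  assumes "transpose C = C"
  shows "\<exists>U d. orthogonal_matrix U \<and> C = U ** diag_mat d ** transpose U
    \<and> inv_sqrt_mat C = U ** diag_mat (\<lambda>i. 1 / sqrt (d i)) ** transpose U"
proof -
  obtain U d where "orthogonal_matrix U" "C = U ** diag_mat d ** transpose U"
    using symmetric_matrix_diagonalization[OF assms] by blast
  then have "\<exists>S U d. orthogonal_matrix U \<and> C = U ** diag_mat d ** transpose U
    \<and> S = U ** diag_mat (\<lambda>i. 1 / sqrt (d i)) ** transpose U" by blast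
  then show ?thesis unfolding inv_sqrt_mat_def by (rule someI_ex)
qed

lemma inv_sqrt_mat_pos_def:
  fixes C :: "real^'n^'n"
  assumes sym: "transpose C = C" and pos: "\<And>y. y \<noteq> 0 \<Longrightarrow> 0 < y \<bullet> (C *v y)"
  shows "transpose (inv_sqrt_mat C) = inv_sqrt_mat C"
    and "inv_sqrt_mat C ** C ** inv_sqrt_mat C = mat 1"
proof -
  obtain U d where oU: "orthogonal_matrix U" and CU: "C = U ** diag_mat d ** transpose U"
    and SU: "inv_sqrt_mat C = U ** diag_mat (\<lambda>i. 1 / sqrt (d i)) ** transpose U"
    using inv_sqrt_mat_spectral[OF sym] by blast
  have UtU: "transpose U ** U = mat 1" and UUt: "U ** transpose U = mat 1"
    using oU by (auto simp: orthogonal_matrix_def)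
  have dpos: "d i > 0" for i
  proof -
    define y where "y = U *v axis i 1"
    have Uty: "transpose U *v y = axis i 1"
      by (simp only: y_def matrix_vector_mul_assoc UtU matrix_vector_mul_lid)
    then have "y \<noteq> 0" by (auto simp: axis_eq_0_iff simp del: transpose_matrix_vector)
    have "y \<bullet> (C *v y) = (transpose U *v y) \<bullet> (diag_mat d *v (transpose U *v y))"
      by (simp only: CU matrix_vector_mul_assoc[symmetric] inner_matrix_vector_transpose[of y U])
    also have "\<dots> = d i" by (simp only: Uty diag_mat_mult_axis inner_axis_axis) simp
    finally show ?thesis using pos[OF \<open>y \<noteq> 0\<close>] by simp
  qed
  have "(\<lambda>i. 1 / sqrt (d i) * (d i * (1 / sqrt (d i)))) = (\<lambda>_. 1)"
  proof
    fix i
    have "sqrt (d i) * sqrt (d i) = d i" using dpos[of i] by simp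
    then show "1 / sqrt (d i) * (d i * (1 / sqrt (d i))) = 1"
      using dpos[of i] by (simp add: field_simps)
  qed
  then have D: "diag_mat (\<lambda>i. 1 / sqrt (d i)) ** diag_mat d ** diag_mat (\<lambda>i. 1 / sqrt (d i))
      = mat 1"
    by (simp add: matrix_mul_assoc diag_mat_mult diag_mat_one)
  have "inv_sqrt_mat C ** C ** inv_sqrt_mat C
      = U ** (diag_mat (\<lambda>i. 1 / sqrt (d i)) ** (transpose U ** U) ** diag_mat d
          ** (transpose U ** U) ** diag_mat (\<lambda>i. 1 / sqrt (d i))) ** transpose U"
    unfolding SU by (subst (1) CU) (simp only: matrix_mul_assoc)
  also have "\<dots> = mat 1"
    by (simp only: UtU matrix_mul_rid D UUt)
  finally show "inv_sqrt_mat C ** C ** inv_sqrt_mat C = mat 1" .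
  show "transpose (inv_sqrt_mat C) = inv_sqrt_mat C"
    by (simp add: SU matrix_transpose_mul matrix_mul_assoc)
qed

lemma gram_matrix_pos_def:
  fixes B :: "real^'n^'n"
  assumes "invertible B" "y \<noteq> 0"
  shows "0 < y \<bullet> ((B ** transpose B) *v y)"
proof -
  have "transpose B *v y \<noteq> transpose B *v 0"
    using inj_matrix_vector_mult[OF transpose_invertible[OF assms(1)]] assms(2)
    by (metis injD)
  then have "transpose B *v y \<noteq> 0" by (simp del: transpose_matrix_vector)
  moreover have "y \<bullet> ((B ** transpose B) *v y) = (transpose B *v y) \<bullet> (transpose B *v y)"
    by (simp only: matrix_vector_mul_assoc[symmetric] inner_matrix_vector_transpose[of y B])
  ultimately show ?thesis by (simp del: transpose_matrix_vector)
qed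

lemma borel_measurable_vec_nth [measurable (raw)]:
  fixes x :: "'a \<Rightarrow> real^'n"
  shows "x \<in> borel_measurable M \<Longrightarrow> (\<lambda>\<omega>. x \<omega> $ i) \<in> borel_measurable M"
  using measurable_compose[OF _ borel_measurable_nth] by blast

context prob_space
begin

lemma integrable_component_mult:
  fixes x :: "'a \<Rightarrow> real^'n"
  assumes [measurable]: "x \<in> borel_measurable M" and sq: "\<And>i. integrable M (\<lambda>\<omega>. (x \<omega> $ i)\<^sup>2)"
  shows "integrable M (\<lambda>\<omega>. x \<omega> $ i * x \<omega> $ j)"
proof (rule Bochner_Integration.integrable_bound)
  show "integrable M (\<lambda>\<omega>. (x \<omega> $ i)\<^sup>2 + (x \<omega> $ j)\<^sup>2)" using sq by simp
  show "(\<lambda>\<omega>. x \<omega> $ i * x \<omega> $ j) \<in> borel_measurable M" by measurable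
  show "AE \<omega> in M. norm (x \<omega> $ i * x \<omega> $ j) \<le> norm ((x \<omega> $ i)\<^sup>2 + (x \<omega> $ j)\<^sup>2)"
  proof (rule AE_I2)
    fix \<omega>
    have "\<bar>x \<omega> $ i\<bar> * \<bar>x \<omega> $ j\<bar> \<le> 2 * \<bar>x \<omega> $ i\<bar> * \<bar>x \<omega> $ j\<bar>" by simp
    also have "\<dots> \<le> (x \<omega> $ i)\<^sup>2 + (x \<omega> $ j)\<^sup>2"
      using sum_squares_bound[of "\<bar>x \<omega> $ i\<bar>" "\<bar>x \<omega> $ j\<bar>"] by simp
    finally show "norm (x \<omega> $ i * x \<omega> $ j) \<le> norm ((x \<omega> $ i)\<^sup>2 + (x \<omega> $ j)\<^sup>2)"
      by (simp add: abs_mult)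
  qed
qed

lemma integrable_component:
  fixes x :: "'a \<Rightarrow> real^'n"
  assumes [measurable]: "x \<in> borel_measurable M" and "\<And>i. integrable M (\<lambda>\<omega>. (x \<omega> $ i)\<^sup>2)"
  shows "integrable M (\<lambda>\<omega>. x \<omega> $ i)"
proof (rule square_integrable_imp_integrable[OF _ assms(2)])
  show "(\<lambda>\<omega>. x \<omega> $ i) \<in> borel_measurable M" by measurable
qed

lemma mean_vec_affine:
  fixes x :: "'a \<Rightarrow> real^'n"
  assumes "\<And>i. integrable M (\<lambda>\<omega>. x \<omega> $ i)"
  shows "mean_vec M (\<lambda>\<omega>. A *v x \<omega> + b) = A *v mean_vec M x + b"
  using assms by (simp add: vec_eq_iff mean_vec_def matrix_vector_mult_def integral_sum prob_space)

lemma cov_mat_affine: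
  fixes x :: "'a \<Rightarrow> real^'n"
  assumes xm: "x \<in> borel_measurable M" and sq: "\<And>i. integrable M (\<lambda>\<omega>. (x \<omega> $ i)\<^sup>2)"
  shows "cov_mat M (\<lambda>\<omega>. A *v x \<omega> + b) = A ** cov_mat M x ** transpose A"
proof -
  define m where "m = mean_vec M x"
  define y where "y \<omega> = x \<omega> - m" for \<omega>
  have centered: "(A *v x \<omega> + b) $ i - mean_vec M (\<lambda>\<omega>. A *v x \<omega> + b) $ i = (A *v y \<omega>) $ i"
    for \<omega> i
    unfolding mean_vec_affine[OF integrable_component[OF xm sq]]
    by (simp add: y_def m_def matrix_vector_mult_diff_distrib)
  have int: "integrable M (\<lambda>\<omega>. y \<omega> $ k * y \<omega> $ l)" for k l
  proof -
    have "(\<lambda>\<omega>. y \<omega> $ k * y \<omega> $ l) =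
      (\<lambda>\<omega>. x \<omega> $ k * x \<omega> $ l - m $ l * x \<omega> $ k - m $ k * x \<omega> $ l + m $ k * m $ l)"
      by (auto simp: y_def algebra_simps)
    then show ?thesis
      using integrable_component[OF xm sq] integrable_component_mult[OF xm sq] by simp
  qed
  have "cov_mat M (\<lambda>\<omega>. A *v x \<omega> + b) $ i $ j = (A ** cov_mat M x ** transpose A) $ i $ j" for i j
  proof -
    have "cov_mat M (\<lambda>\<omega>. A *v x \<omega> + b) $ i $ j
        = integral\<^sup>L M (\<lambda>\<omega>. (A *v y \<omega>) $ i * (A *v y \<omega>) $ j)"
      by (simp only: cov_mat_def vec_lambda_beta centered)
    also have "\<dots> = integral\<^sup>L M
        (\<lambda>\<omega>. \<Sum>k\<in>UNIV. \<Sum>l\<in>UNIV. A $ i $ k * A $ j $ l * (y \<omega> $ k * y \<omega> $ l))"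
      by (simp add: matrix_vector_mult_def sum_product mult_ac)
    also have "\<dots> = (\<Sum>k\<in>UNIV. \<Sum>l\<in>UNIV. A $ i $ k * A $ j $ l * cov_mat M x $ k $ l)"
      using int by (simp add: integral_sum cov_mat_def y_def m_def)
    also have "\<dots> = (A ** cov_mat M x ** transpose A) $ i $ j"
      by (subst sum.swap) (simp add: matrix_matrix_mult_def transpose_def sum_distrib_left mult_ac)
    finally show ?thesis .
  qed
  then show ?thesis by (simp add: vec_eq_iff)
qed

end

text \<open>
  The part of \<open>sq_dispersion_on\<close> that is used; unlike nonnegativity it survives
  \<open>D \<mapsto> -D\<close>, which exchanges superadditivity and subadditivity.
\<close>

definition affine_sq_homogeneous_on ::
    "'a measure \<Rightarrow> ('a \<Rightarrow> real^'p) \<Rightarrow> (real measure \<Rightarrow> real) \<Rightarrow> bool" where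
  "affine_sq_homogeneous_on M z D \<longleftrightarrow>
     (\<forall>u \<in> lin_combs z. \<forall>a b::real.
        D (distr M borel (\<lambda>\<omega>. a * u \<omega> + b)) = a\<^sup>2 * D (distr M borel u))"

lemma sq_dispersion_on_imp_affine_sq_homogeneous_on:
  "sq_dispersion_on M z D \<Longrightarrow> affine_sq_homogeneous_on M z D"
  by (simp add: sq_dispersion_on_def affine_sq_homogeneous_on_def)

lemma affine_sq_homogeneous_on_uminus:
  "affine_sq_homogeneous_on M z D \<Longrightarrow> affine_sq_homogeneous_on M z (\<lambda>\<mu>. - D \<mu>)"
  by (simp add: affine_sq_homogeneous_on_def)

lemma subadditive_on_uminus_iff:
  "subadditive_on M z (\<lambda>\<mu>. - D \<mu>) \<longleftrightarrow> superadditive_on M z D"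
proof -
  have "(- a \<le> - b - c) \<longleftrightarrow> (b + c \<le> a)" for a b c :: real by linarith
  then show ?thesis by (simp add: subadditive_on_def superadditive_on_def)
qed

lemma inner_in_lin_combs: "(\<lambda>\<omega>. c \<bullet> z \<omega>) \<in> lin_combs z"
  unfolding lin_combs_def by (intro CollectI exI[of _ c] exI[of _ 0]) simp

lemma partial_sum_in_lin_combs:
  fixes z :: "'a \<Rightarrow> real^'p"
  shows "(\<lambda>\<omega>. \<Sum>j\<in>F. w $ j * z \<omega> $ j) \<in> lin_combs z"
proof -
  define c :: "real^'p" where "c = (\<chi> j. if j \<in> F then w $ j else 0)"
  have "c \<bullet> z \<omega> = (\<Sum>j\<in>UNIV. if j \<in> F then w $ j * z \<omega> $ j else 0)" for \<omega>
    by (simp add: c_def inner_vec_def if_distrib if_distribR cong: if_cong)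
  then have "(\<lambda>\<omega>. \<Sum>j\<in>F. w $ j * z \<omega> $ j) = (\<lambda>\<omega>. c \<bullet> z \<omega>)"
    by (simp add: sum.inter_restrict[symmetric])
  then show ?thesis by (simp only: inner_in_lin_combs)
qed

lemma scaled_component_in_lin_combs: "(\<lambda>\<omega>. a * z \<omega> $ k) \<in> lin_combs z"
  using inner_in_lin_combs[of "axis k a" z] by (simp add: inner_axis')

lemma affine_sq_homogeneous_on_component:
  assumes "affine_sq_homogeneous_on M z D"
  shows "D (distr M borel (\<lambda>\<omega>. a * z \<omega> $ k)) = a\<^sup>2 * D (distr M borel (\<lambda>\<omega>. z \<omega> $ k))"
proof -
  have "(\<lambda>\<omega>. z \<omega> $ k) \<in> lin_combs z"
    using scaled_component_in_lin_combs[of 1 z k] by simp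
  then show ?thesis
    using assms[unfolded affine_sq_homogeneous_on_def, rule_format, of "\<lambda>\<omega>. z \<omega> $ k" a 0] by simp
qed

lemma (in prob_space) indep_var_component_partial_sum:
  fixes z :: "'a \<Rightarrow> real^'p"
  assumes "indep_vars (\<lambda>_. borel) (\<lambda>j \<omega>. z \<omega> $ j) UNIV" and "k \<notin> F"
  shows "indep_var borel (\<lambda>\<omega>. w $ k * z \<omega> $ k) borel (\<lambda>\<omega>. \<Sum>j\<in>F. w $ j * z \<omega> $ j)"
proof -
  have "indep_vars (\<lambda>_. borel) (\<lambda>j \<omega>. w $ j * z \<omega> $ j) UNIV"
    using indep_vars_compose2[OF assms(1), of "\<lambda>j t. w $ j * t" "\<lambda>_. borel"] by simp
  then have "indep_vars (\<lambda>_. borel) (\<lambda>j \<omega>. w $ j * z \<omega> $ j) (insert k F)"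
    by (rule indep_vars_subset) simp
  then show ?thesis using indep_vars_sum[of F k] assms(2) by simp
qed

lemma (in prob_space) subadditive_on_weighted_sum_le:
  fixes z :: "'a \<Rightarrow> real^'p"
  assumes indep: "indep_vars (\<lambda>_. borel) (\<lambda>j \<omega>. z \<omega> $ j) UNIV"
    and hom: "affine_sq_homogeneous_on M z D" and sub: "subadditive_on M z D"
  shows "D (distr M borel (\<lambda>\<omega>. \<Sum>j\<in>F. w $ j * z \<omega> $ j))
    \<le> (\<Sum>j\<in>F. (w $ j)\<^sup>2 * D (distr M borel (\<lambda>\<omega>. z \<omega> $ j)))"
  using finite[of F]
proof (induction F rule: finite_induct)
  case empty
  then show ?case using affine_sq_homogeneous_on_component[OF hom, of 0] by simp
next
  case (insert k F)
  have "D (distr M borel (\<lambda>\<omega>. w $ k * z \<omega> $ k + (\<Sum>j\<in>F. w $ j * z \<omega> $ j)))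
     \<le> D (distr M borel (\<lambda>\<omega>. w $ k * z \<omega> $ k))
       + D (distr M borel (\<lambda>\<omega>. \<Sum>j\<in>F. w $ j * z \<omega> $ j))"
    using sub indep_var_component_partial_sum[OF indep insert(2)]
    by (simp add: subadditive_on_def scaled_component_in_lin_combs partial_sum_in_lin_combs)
  then show ?case using insert affine_sq_homogeneous_on_component[OF hom] by simp
qed

lemma (in prob_space) superadditive_on_weighted_sum_ge:
  fixes z :: "'a \<Rightarrow> real^'p"
  assumes "indep_vars (\<lambda>_. borel) (\<lambda>j \<omega>. z \<omega> $ j) UNIV"
    and "affine_sq_homogeneous_on M z D" and "superadditive_on M z D"
  shows "D (distr M borel (\<lambda>\<omega>. \<Sum>j\<in>F. w $ j * z \<omega> $ j))
    \<ge> (\<Sum>j\<in>F. (w $ j)\<^sup>2 * D (distr M borel (\<lambda>\<omega>. z \<omega> $ j)))"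
  using subadditive_on_weighted_sum_le[OF assms(1) affine_sq_homogeneous_on_uminus[OF assms(2)]]
    assms(3)
  by (simp add: subadditive_on_uminus_iff sum_negf)

lemma unit_weighted_sum_le_Max:
  fixes w :: "real^'n"
  assumes "w \<bullet> w = 1"
  shows "(\<Sum>j\<in>UNIV. (w $ j)\<^sup>2 * f j) \<le> (MAX j. f j)"
proof -
  have "(\<Sum>j\<in>UNIV. (w $ j)\<^sup>2 * f j) \<le> (\<Sum>j\<in>UNIV. (w $ j)\<^sup>2 * (MAX j. f j))"
    by (intro sum_mono mult_left_mono) auto
  also have "\<dots> = (MAX j. f j)"
    using assms by (simp add: inner_vec_def power2_eq_square flip: sum_distrib_right)
  finally show ?thesis .
qed

lemma unit_weighted_sum_ge_Min:
  fixes w :: "real^'n"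
  assumes "w \<bullet> w = 1"
  shows "(\<Sum>j\<in>UNIV. (w $ j)\<^sup>2 * f j) \<ge> (MIN j. f j)"
proof -
  have "(MIN j. f j) = (\<Sum>j\<in>UNIV. (w $ j)\<^sup>2 * (MIN j. f j))"
    using assms by (simp add: inner_vec_def power2_eq_square flip: sum_distrib_right)
  also have "\<dots> \<le> (\<Sum>j\<in>UNIV. (w $ j)\<^sup>2 * f j)"
    by (intro sum_mono mult_left_mono) auto
  finally show ?thesis .
qed

lemma (in prob_space) standardize_eq_unit_inner:
  fixes x :: "'a \<Rightarrow> real^'n" and A :: "real^'n^'n"
  assumes xm: "x \<in> borel_measurable M" and sq: "\<And>i. integrable M (\<lambda>\<omega>. (x \<omega> $ i)\<^sup>2)"
    and A: "invertible A" and cov: "cov_mat M (\<lambda>\<omega>. A *v x \<omega> + b) = mat 1"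
    and v: "v \<bullet> v = 1"
  obtains w c where "w \<bullet> w = 1" "\<And>\<omega>. v \<bullet> standardize M x \<omega> = w \<bullet> (A *v x \<omega> + b) + c"
proof -
  obtain A' where AA': "A ** A' = mat 1" and A'A: "A' ** A = mat 1"
    using A unfolding invertible_def by blast
  have A': "invertible A'" using AA' A'A unfolding invertible_def by blast
  define C where "C = cov_mat M x"
  have ACA: "A ** C ** transpose A = mat 1"
    using cov_mat_affine[OF xm sq, of A b] cov by (simp add: C_def)
  have "transpose A ** transpose A' = mat 1"
    by (metis A'A matrix_transpose_mul transpose_mat)
  then have "C = (A' ** A) ** C ** (transpose A ** transpose A')"
    by (simp only: A'A matrix_mul_lid matrix_mul_rid)
  also have "\<dots> = A' ** (A ** C ** transpose A) ** transpose A'"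
    by (simp only: matrix_mul_assoc)
  finally have C: "C = A' ** transpose A'"
    by (simp only: ACA matrix_mul_rid)
  define S where "S = inv_sqrt_mat C"
  have "transpose C = C" by (simp add: C matrix_transpose_mul)
  moreover have "\<And>y. y \<noteq> 0 \<Longrightarrow> 0 < y \<bullet> (C *v y)" unfolding C by (rule gram_matrix_pos_def[OF A'])
  ultimately have S: "transpose S = S" "S ** C ** S = mat 1"
    unfolding S_def by (fact inv_sqrt_mat_pos_def)+
  \<comment> \<open>\<open>w\<close> is a unit vector because \<open>(S A\<^sup>-\<^sup>1) (S A\<^sup>-\<^sup>1)' = S C S = I\<close>\<close>
  define w where "w = transpose (S ** A') *v v"
  have "w \<bullet> w = v \<bullet> ((S ** A' ** transpose (S ** A')) *v v)"
    by (subst matrix_vector_mul_assoc[symmetric])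
      (simp only: w_def inner_matrix_vector_transpose[of v "S ** A'"])
  also have "\<dots> = 1"
    using S v by (simp add: C matrix_transpose_mul matrix_mul_assoc)
  finally have "w \<bullet> w = 1" .
  moreover have "v \<bullet> standardize M x \<omega>
      = w \<bullet> (A *v x \<omega> + b) + (- (v \<bullet> (S *v (A' *v b + mean_vec M x))))" for \<omega>
  proof -
    have "A' *v (A *v x \<omega> + b) = x \<omega> + A' *v b"
      by (simp add: matrix_vector_right_distrib matrix_vector_mul_assoc A'A)
    then have "v \<bullet> standardize M x \<omega>
        = v \<bullet> (S *v (A' *v (A *v x \<omega> + b))) - v \<bullet> (S *v (A' *v b + mean_vec M x))"
      by (simp add: standardize_def matrix_vector_right_distrib matrix_vector_mult_diff_distrib
          inner_add_right inner_diff_right flip: C_def S_def)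
    then show ?thesis
      by (simp add: w_def matrix_vector_mul_assoc inner_matrix_vector_transpose[of v])
  qed
  ultimately show ?thesis using that by blast
qed

theorem theorem5:
  fixes M :: "'a measure" and x :: "'a \<Rightarrow> real^'p"
    and A :: "real^'p^'p" and b :: "real^'p"
    and D :: "real measure \<Rightarrow> real" and v :: "real^'p"
  assumes "prob_space M"
    and "x \<in> borel_measurable M"
    and "\<And>i. integrable M (\<lambda>\<omega>. (x \<omega> $ i)\<^sup>2)"
    and "invertible (cov_mat M x)"
    and "invertible A"
    and "prob_space.indep_vars M (\<lambda>_. borel) (\<lambda>j \<omega>. (A *v x \<omega> + b) $ j) UNIV"
    and "mean_vec M (\<lambda>\<omega>. A *v x \<omega> + b) = 0"
    and "cov_mat M (\<lambda>\<omega>. A *v x \<omega> + b) = mat 1"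
    and "sq_dispersion_on M (\<lambda>\<omega>. A *v x \<omega> + b) D"
    and "v \<bullet> v = 1"
  shows "(subadditive_on M (\<lambda>\<omega>. A *v x \<omega> + b) D \<longrightarrow>
            D (distr M borel (\<lambda>\<omega>. v \<bullet> standardize M x \<omega>))
              \<le> (MAX j. D (distr M borel (\<lambda>\<omega>. (A *v x \<omega> + b) $ j))))
       \<and> (superadditive_on M (\<lambda>\<omega>. A *v x \<omega> + b) D \<longrightarrow>
            D (distr M borel (\<lambda>\<omega>. v \<bullet> standardize M x \<omega>))
              \<ge> (MIN j. D (distr M borel (\<lambda>\<omega>. (A *v x \<omega> + b) $ j))))"
proof -
  interpret prob_space M by (fact assms(1))
  define z where "z = (\<lambda>\<omega>. A *v x \<omega> + b)"
  have indep: "indep_vars (\<lambda>_. borel) (\<lambda>j \<omega>. z \<omega> $ j) UNIV"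
    using assms(6) by (simp add: z_def)
  have hom: "affine_sq_homogeneous_on M z D"
    using sq_dispersion_on_imp_affine_sq_homogeneous_on[OF assms(9)] by (simp add: z_def)
  obtain w c where w: "w \<bullet> w = 1" and std: "\<And>\<omega>. v \<bullet> standardize M x \<omega> = w \<bullet> z \<omega> + c"
    using standardize_eq_unit_inner[OF assms(2,3,5,8,10)] by (auto simp: z_def)
  have "D (distr M borel (\<lambda>\<omega>. v \<bullet> standardize M x \<omega>))
      = D (distr M borel (\<lambda>\<omega>. \<Sum>j\<in>UNIV. w $ j * z \<omega> $ j))"
    unfolding std
    using hom[unfolded affine_sq_homogeneous_on_def, rule_format, OF inner_in_lin_combs[of w z], of 1 c]
    by (simp add: inner_vec_def)
  moreover have "subadditive_on M z D \<Longrightarrow> D (distr M borel (\<lambda>\<omega>. \<Sum>j\<in>UNIV. w $ j * z \<omega> $ j))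
      \<le> (MAX j. D (distr M borel (\<lambda>\<omega>. z \<omega> $ j)))"
    using subadditive_on_weighted_sum_le[OF indep hom] unit_weighted_sum_le_Max[OF w]
    by (rule order_trans)
  moreover have "superadditive_on M z D \<Longrightarrow> D (distr M borel (\<lambda>\<omega>. \<Sum>j\<in>UNIV. w $ j * z \<omega> $ j))
      \<ge> (MIN j. D (distr M borel (\<lambda>\<omega>. z \<omega> $ j)))"
    using unit_weighted_sum_ge_Min[OF w] superadditive_on_weighted_sum_ge[OF indep hom]
    by (rule order_trans)
  ultimately show ?thesis by (simp add: z_def)
qed

end
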